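(* Consider the system \[ \begin{aligned} \dot S_h(t)&=\beta_h-C_{vh}\frac{I_v(t)}{N_v(t)}S_h(t)-\mu_hS_h(t),\\ \dot I_h(t)&=C_{vh}\frac{I_v(t-\tau)}{N_v(t-\tau)}S_h(t-\tau)-\mu_hI_h(t),\\ \dot S_v(t)&=\beta_v-C_{hv}I_h(t)S_v(t)-\mu_vS_v(t),\\ \dot I_v(t)&=C_{hv}I_h(t)S_v(t)-\mu_vI_v(t), \end{aligned} \] with $N_v=S_v+I_v$ and positive parameters $\beta_h,\beta_v,\mu_h,\mu_v,C_{vh},C_{hv}$. Let $R_0=\sqrt{C_{vh}C_{hv}\beta_h/(\mu_h^2\mu_v)}$. If $R_0>1$, then the unique endemic equilibrium $E^*$ (the unique equilibrium with all components positive) is locally asymptotically stable for any $\tau\ge0$.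
   Context: The phase space is $C_+=\{\varphi\in C([-\tau,0],\mathbb{R}_+^4):\varphi_3(\theta)+\varphi_4(\theta)>0\ \forall\theta\in[-\tau,0]\}$ with the sup-norm. *)

theory Defs
  imports "HOL-Analysis.Analysis"
begin

definition R0 :: "real \<Rightarrow> real \<Rightarrow> real \<Rightarrow> real \<Rightarrow> real \<Rightarrow> real \<Rightarrow> real" where
  "R0 bh bv mh mv Cvh Chv = sqrt (Cvh * Chv * bh / (mh\<^sup>2 * mv))"

definition is_equilibrium ::
  "real \<Rightarrow> real \<Rightarrow> real \<Rightarrow> real \<Rightarrow> real \<Rightarrow> real \<Rightarrow> real \<times> real \<times> real \<times> real \<Rightarrow> bool" where
  "is_equilibrium bh bv mh mv Cvh Chv E \<longleftrightarrow>
     (case E of (sh, ih, sv, iv) \<Rightarrow>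
        sv + iv > 0 \<and>
        bh - Cvh * (iv / (sv + iv)) * sh - mh * sh = 0 \<and>
        Cvh * (iv / (sv + iv)) * sh - mh * ih = 0 \<and>
        bv - Chv * ih * sv - mv * sv = 0 \<and>
        Chv * ih * sv - mv * iv = 0)"

definition endemic_equilibrium ::
  "real \<Rightarrow> real \<Rightarrow> real \<Rightarrow> real \<Rightarrow> real \<Rightarrow> real \<Rightarrow> real \<times> real \<times> real \<times> real \<Rightarrow> bool" where
  "endemic_equilibrium bh bv mh mv Cvh Chv E \<longleftrightarrow>
     is_equilibrium bh bv mh mv Cvh Chv E \<and>
     (case E of (sh, ih, sv, iv) \<Rightarrow> sh > 0 \<and> ih > 0 \<and> sv > 0 \<and> iv > 0)"

definition in_Cplus :: "real \<Rightarrow> (real \<Rightarrow> real) \<Rightarrow> (real \<Rightarrow> real) \<Rightarrow> (real \<Rightarrow> real) \<Rightarrow> (real \<Rightarrow> real) \<Rightarrow> bool" where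
  "in_Cplus tau Sh Ih Sv Iv \<longleftrightarrow>
     continuous_on {-tau..0} Sh \<and> continuous_on {-tau..0} Ih \<and>
     continuous_on {-tau..0} Sv \<and> continuous_on {-tau..0} Iv \<and>
     (\<forall>\<theta>\<in>{-tau..0}. Sh \<theta> \<ge> 0 \<and> Ih \<theta> \<ge> 0 \<and> Sv \<theta> \<ge> 0 \<and> Iv \<theta> \<ge> 0 \<and> Sv \<theta> + Iv \<theta> > 0)"

definition is_solution ::
  "real \<Rightarrow> real \<Rightarrow> real \<Rightarrow> real \<Rightarrow> real \<Rightarrow> real \<Rightarrow> real \<Rightarrow>
   (real \<Rightarrow> real) \<Rightarrow> (real \<Rightarrow> real) \<Rightarrow> (real \<Rightarrow> real) \<Rightarrow> (real \<Rightarrow> real) \<Rightarrow> bool" where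
  "is_solution bh bv mh mv Cvh Chv tau Sh Ih Sv Iv \<longleftrightarrow>
     continuous_on {-tau..} Sh \<and> continuous_on {-tau..} Ih \<and>
     continuous_on {-tau..} Sv \<and> continuous_on {-tau..} Iv \<and>
     (\<forall>t\<ge>0.
        (Sh has_real_derivative
           (bh - Cvh * (Iv t / (Sv t + Iv t)) * Sh t - mh * Sh t)) (at t within {0..}) \<and>
        (Ih has_real_derivative
           (Cvh * (Iv (t - tau) / (Sv (t - tau) + Iv (t - tau))) * Sh (t - tau) - mh * Ih t))
           (at t within {0..}) \<and>
        (Sv has_real_derivative (bv - Chv * Ih t * Sv t - mv * Sv t)) (at t within {0..}) \<and>
        (Iv has_real_derivative (Chv * Ih t * Sv t - mv * Iv t)) (at t within {0..}))"

definition init_close ::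
  "real \<Rightarrow> real \<times> real \<times> real \<times> real \<Rightarrow> real \<Rightarrow>
   (real \<Rightarrow> real) \<Rightarrow> (real \<Rightarrow> real) \<Rightarrow> (real \<Rightarrow> real) \<Rightarrow> (real \<Rightarrow> real) \<Rightarrow> bool" where
  "init_close tau E d Sh Ih Sv Iv \<longleftrightarrow>
     (case E of (sh, ih, sv, iv) \<Rightarrow>
       (SUP \<theta>\<in>{-tau..0}. max (max \<bar>Sh \<theta> - sh\<bar> \<bar>Ih \<theta> - ih\<bar>) (max \<bar>Sv \<theta> - sv\<bar> \<bar>Iv \<theta> - iv\<bar>)) < d)"

definition locally_asymptotically_stable ::
  "real \<Rightarrow> real \<Rightarrow> real \<Rightarrow> real \<Rightarrow> real \<Rightarrow> real \<Rightarrow> real \<Rightarrow> real \<times> real \<times> real \<times> real \<Rightarrow> bool" where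
  "locally_asymptotically_stable bh bv mh mv Cvh Chv tau E \<longleftrightarrow>
     (case E of (sh, ih, sv, iv) \<Rightarrow>
       \<comment> \<open>stability\<close>
       (\<forall>\<epsilon>>0. \<exists>\<delta>>0. \<forall>Sh Ih Sv Iv.
          in_Cplus tau Sh Ih Sv Iv \<and> init_close tau E \<delta> Sh Ih Sv Iv \<and>
          is_solution bh bv mh mv Cvh Chv tau Sh Ih Sv Iv \<longrightarrow>
          (\<forall>t\<ge>0. \<bar>Sh t - sh\<bar> < \<epsilon> \<and> \<bar>Ih t - ih\<bar> < \<epsilon> \<and> \<bar>Sv t - sv\<bar> < \<epsilon> \<and> \<bar>Iv t - iv\<bar> < \<epsilon>)) \<and>
       \<comment> \<open>local attractivity\<close>
       (\<exists>\<delta>>0. \<forall>Sh Ih Sv Iv.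
          in_Cplus tau Sh Ih Sv Iv \<and> init_close tau E \<delta> Sh Ih Sv Iv \<and>
          is_solution bh bv mh mv Cvh Chv tau Sh Ih Sv Iv \<longrightarrow>
          (Sh \<longlongrightarrow> sh) at_top \<and> (Ih \<longlongrightarrow> ih) at_top \<and>
          (Sv \<longlongrightarrow> sv) at_top \<and> (Iv \<longlongrightarrow> iv) at_top))"

end

(*
  The endemic equilibrium is found by elimination; its I_h-component is positive exactly when
  R0 > 1.

  Stability is proved with a Volterra-type Lyapunov functional. Write (sh, ih, sv, iv) for the
  endemic equilibrium, N = sv + iv, g(x) = x - 1 - ln x, F = C_vh I_v S_h / N_v for the incidence
  and Feq for its equilibrium value. Then
    W = sh g(S_h/sh) + ih g(I_h/ih) + a (sv g(S_v/sv) + iv g(I_v/iv))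
        + Feq * integral over [t - tau, t] of g(F(s)/Feq) ds + c (N_v - N)^2.
  Along solutions near the equilibrium, the logarithmic terms of W' combine into minus a sum of
  g-values because the product of the ratios involved is 1, and the perturbation caused by
  N_v /= N is absorbed by the c-term, so W' <= -k ((S_h - sh)^2 + (S_v - sv)^2). As W is
  squeezed between quadratic multiples of the deviation from the equilibrium, solutions starting
  close to it stay close. The dissipation together with bounded derivatives forces S_h and S_v to
  converge; the linear equations for N_v and I_h then give convergence of I_v and I_h.
*)

theory Submission
  imports Defs "HOL-Real_Asymp.Real_Asymp"
begin

definition volterra :: "real \<Rightarrow> real" where
  "volterra x = x - 1 - ln x"

lemma volterra_nonneg: "x > 0 \<Longrightarrow> volterra x \<ge> 0"
  using ln_le_minus_one[of x] by (simp add: volterra_def)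

lemma volterra_le_sq_div: "x > 0 \<Longrightarrow> volterra x \<le> (x - 1)^2 / x"
  using ln_le_minus_one[of "1/x"]
  by (simp add: volterra_def ln_div field_simps power2_eq_square)

lemma volterra_le_two_sq:
  assumes "x \<ge> 1/2"
  shows "volterra x \<le> 2 * (x - 1)^2"
proof -
  have "volterra x \<le> (x - 1)^2 / x" using assms by (intro volterra_le_sq_div) simp
  also have "\<dots> \<le> (x - 1)^2 / (1/2)" using assms by (intro divide_left_mono) auto
  finally show ?thesis by simp
qed

lemma volterra_ge_quarter_sq:
  assumes "0 < x" "x \<le> 2"
  shows "(x - 1)^2 / 4 \<le> volterra x"
proof -
  define h where "h y = volterra y - (y - 1)^2 / 4" for y
  have dh: "(h has_real_derivative (y - 1) * (2 - y) / (2 * y)) (at y)" if "y > 0" for y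
    unfolding h_def volterra_def using that
    by (auto intro!: derivative_eq_intros simp: field_simps power2_eq_square)
  have cont: "continuous_on {u..v} h" if "0 < u" for u v
    unfolding h_def volterra_def using that by (intro continuous_intros) auto
  have "h 1 \<le> h x"
  proof (cases "x \<ge> 1")
    case True
    show ?thesis
    proof (rule DERIV_nonneg_imp_increasing_open[OF True _ cont])
      fix y assume "1 < y" "y < x"
      then show "\<exists>d. (h has_real_derivative d) (at y) \<and> d \<ge> 0"
        using assms dh[of y] by (intro exI[of _ "(y - 1) * (2 - y) / (2 * y)"]) simp
    qed simp
  next
    case False
    show ?thesis
    proof (rule DERIV_nonpos_imp_decreasing_open[of x 1 h, OF _ _ cont])
      fix y assume "x < y" "y < 1"
      then show "\<exists>d. (h has_real_derivative d) (at y) \<and> d \<le> 0"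
        using assms dh[of y]
        by (intro exI[of _ "(y - 1) * (2 - y) / (2 * y)"]) (simp add: mult_nonpos_nonneg divide_nonpos_pos)
    qed (use False assms in auto)
  qed
  then show ?thesis by (simp add: h_def volterra_def)
qed

lemma has_real_derivative_scaled_volterra:
  assumes "x > 0" "f y > 0" "(f has_real_derivative D) (at y)"
  shows "((\<lambda>t. x * volterra (f t / x)) has_real_derivative (1 - x / f y) * D) (at y)"
  unfolding volterra_def using assms
  by (auto intro!: derivative_eq_intros simp: field_simps)

lemma scaled_volterra_ge:
  assumes "x > 0" "X > 0" "X \<le> 2 * x"
  shows "(X - x)^2 / (4 * x) \<le> x * volterra (X / x)"
proof -
  have "(X - x)^2 / (4 * x) = x * ((X/x - 1)^2 / 4)"
    using assms(1) by (simp add: field_simps power2_eq_square)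
  also have "\<dots> \<le> x * volterra (X / x)"
    using assms by (intro mult_left_mono volterra_ge_quarter_sq) (auto simp: field_simps)
  finally show ?thesis .
qed

lemma scaled_volterra_le:
  assumes "x > 0" "X \<ge> x/2" "\<bar>X - x\<bar> \<le> d"
  shows "x * volterra (X / x) \<le> 2 * d^2 / x"
proof -
  have "x * volterra (X / x) \<le> x * (2 * (X/x - 1)^2)"
    using assms by (intro mult_left_mono volterra_le_two_sq) (auto simp: field_simps)
  also have "\<dots> = 2 * (X - x)^2 / x"
    using assms(1) by (simp add: field_simps power2_eq_square)
  also have "\<dots> \<le> 2 * d^2 / x"
    using assms power_mono[of "\<bar>X - x\<bar>" d 2] by (intro divide_right_mono) auto
  finally show ?thesis .
qed

lemma has_real_derivative_at_of_within_atLeast: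
  assumes "t > a" "(f has_real_derivative D) (at t within {a..})"
  shows "(f has_real_derivative D) (at t)"
proof -
  have "(f has_real_derivative D) (at t within {a<..})"
    by (rule DERIV_subset[OF assms(2)]) auto
  then show ?thesis using at_within_open[of t "{a<..}"] assms(1) by auto
qed

lemma diff_le_of_deriv_le:
  fixes f f' :: "real \<Rightarrow> real"
  assumes "a \<le> b" "continuous_on {a..b} f"
    and "\<And>x. a < x \<Longrightarrow> x < b \<Longrightarrow> (f has_real_derivative f' x) (at x)"
    and "\<And>x. a < x \<Longrightarrow> x < b \<Longrightarrow> f' x \<le> B"
  shows "f b - f a \<le> B * (b - a)"
proof -
  have "(\<lambda>x. B * x - f x) a \<le> (\<lambda>x. B * x - f x) b"
    using assms
    by (intro DERIV_nonneg_imp_increasing_open[OF assms(1)] continuous_intros)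
       (force intro!: derivative_eq_intros)+
  then show ?thesis by (simp add: algebra_simps)
qed

lemma abs_diff_le_of_deriv_bound:
  fixes f f' :: "real \<Rightarrow> real"
  assumes "a \<le> b" "continuous_on {a..b} f"
    and "\<And>x. a < x \<Longrightarrow> x < b \<Longrightarrow> (f has_real_derivative f' x) (at x)"
    and "\<And>x. a < x \<Longrightarrow> x < b \<Longrightarrow> \<bar>f' x\<bar> \<le> B"
  shows "\<bar>f b - f a\<bar> \<le> B * (b - a)"
proof -
  have "f b - f a \<le> B * (b - a)"
    using assms by (intro diff_le_of_deriv_le[of a b f f']) (auto simp: abs_le_iff)
  moreover have "(- f b) - (- f a) \<le> B * (b - a)"
    using assms
    by (intro diff_le_of_deriv_le[of a b _ "\<lambda>x. - f' x"] continuous_intros)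
       (auto intro!: derivative_eq_intros simp: abs_le_iff)
  ultimately show ?thesis by linarith
qed

lemma continuous_on_of_DERIV:
  "(\<And>x. x \<in> S \<Longrightarrow> (f has_real_derivative f' x) (at x)) \<Longrightarrow> continuous_on S f"
  by (intro continuous_at_imp_continuous_on ballI DERIV_isCont) auto

lemma diff_le_of_dissipation:
  fixes W W' g :: "real \<Rightarrow> real"
  assumes "s \<le> t" "continuous_on {s..t} W" "k \<ge> 0" "\<eta> \<ge> 0"
    and "\<And>x. s < x \<Longrightarrow> x < t \<Longrightarrow> (W has_real_derivative W' x) (at x)"
    and "\<And>x. s < x \<Longrightarrow> x < t \<Longrightarrow> W' x \<le> - k * (g x)^2"
    and "\<And>x. s < x \<Longrightarrow> x < t \<Longrightarrow> \<eta> \<le> \<bar>g x\<bar>"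
  shows "W t - W s \<le> - k * \<eta>^2 * (t - s)"
proof (rule diff_le_of_deriv_le[OF assms(1,2,5)])
  fix x assume x: "s < x" "x < t"
  have "\<eta>^2 \<le> (g x)^2" using power_mono[of \<eta> "\<bar>g x\<bar>" 2] assms(4) assms(7)[OF x] by simp
  then have "k * \<eta>^2 \<le> k * (g x)^2" using assms(3) by (intro mult_left_mono) auto
  then show "W' x \<le> - k * \<eta>^2" using assms(6)[OF x] by linarith
qed

lemma tendsto_zero_of_dissipation:
  fixes W W' g g' :: "real \<Rightarrow> real"
  assumes k: "k > 0" and B: "B > 0"
    and dW: "\<And>t. t > 0 \<Longrightarrow> (W has_real_derivative W' t) (at t)"
    and W_nonneg: "\<And>t. t > 0 \<Longrightarrow> W t \<ge> 0"
    and dissipation: "\<And>t. t > 0 \<Longrightarrow> W' t \<le> - k * (g t)^2"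
    and dg: "\<And>t. t > 0 \<Longrightarrow> (g has_real_derivative g' t) (at t)"
    and g'_bound: "\<And>t. t > 0 \<Longrightarrow> \<bar>g' t\<bar> \<le> B"
  shows "(g \<longlongrightarrow> 0) at_top"
proof (rule tendstoI)
  fix e :: real assume e: "e > 0"
  define h where "h = e / (2 * B)"
  have h: "h > 0" and Bh: "B * h = e / 2" using e B by (auto simp: h_def)
  have W_drop: "W t - W s \<le> - k * \<eta>^2 * (t - s)"
    if "0 < s" "s \<le> t" "\<eta> \<ge> 0" "\<And>x. s < x \<Longrightarrow> x < t \<Longrightarrow> \<bar>g x\<bar> \<ge> \<eta>" for s t \<eta>
    using that k dW dissipation
    by (intro diff_le_of_dissipation[of s t W k \<eta> W' g] continuous_on_of_DERIV[of _ W W']) auto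
  define L where "L = Inf (W ` {1..})"
  have bdd: "bdd_below (W ` {1..})" using W_nonneg by (auto intro!: bdd_belowI[of _ 0])
  obtain T where T: "T \<ge> 1" "W T < L + k * (e/2)^2 * h"
    using cInf_less_iff[OF _ bdd, of "L + k * (e/2)^2 * h"] k e h by (auto simp: L_def)
  \<comment> \<open>Otherwise the Lipschitz bound keeps \<open>|g| \<ge> e/2\<close> on \<open>[t, t + h]\<close>,
    and \<open>W\<close> would drop below its infimum \<open>L\<close>.\<close>
  have "\<bar>g t\<bar> < e" if t: "t \<ge> T" for t
  proof (rule ccontr)
    assume "\<not> \<bar>g t\<bar> < e"
    have "\<bar>g x\<bar> \<ge> e/2" if x: "t < x" "x < t + h" for x
    proof -
      have "\<bar>g x - g t\<bar> \<le> B * (x - t)"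
        using x t T dg g'_bound
        by (intro abs_diff_le_of_deriv_bound[of t x g g'] continuous_on_of_DERIV[of _ g g']) auto
      also have "\<dots> \<le> B * h" using x B by (intro mult_left_mono) auto
      also have "\<dots> = e/2" by (rule Bh)
      finally show ?thesis using \<open>\<not> \<bar>g t\<bar> < e\<close> by linarith
    qed
    then have "W (t + h) - W t \<le> - k * (e/2)^2 * h"
      using W_drop[of t "t + h" "e/2"] t T h e by auto
    moreover have "W t - W T \<le> 0" using W_drop[of T t 0] t T by simp
    moreover have "L \<le> W (t + h)" unfolding L_def using bdd t T h by (intro cInf_lower) auto
    ultimately show False using T(2) by linarith
  qed
  then show "\<forall>\<^sub>F t in at_top. dist (g t) 0 < e"
    by (auto simp: eventually_at_top_linorder intro!: exI[of _ T])
qed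

lemma eventually_less_of_linear_ode:
  fixes y h :: "real \<Rightarrow> real"
  assumes m: "m > 0"
    and dy: "\<And>t. t > 0 \<Longrightarrow> (y has_real_derivative h t - m * y t) (at t)"
    and h_le: "\<forall>\<^sub>F t in at_top. h t \<le> b" and e: "e > 0"
  shows "\<forall>\<^sub>F t in at_top. y t < b / m + e"
proof -
  obtain T0 where "\<And>t. t \<ge> T0 \<Longrightarrow> h t \<le> b"
    using h_le unfolding eventually_at_top_linorder by blast
  then obtain T where T: "T > 0" "\<And>t. t \<ge> T \<Longrightarrow> h t \<le> b"
    by (metis max.cobounded1 max.strict_coboundedI2 order.trans zero_less_one)
  have y_le: "y t - b/m \<le> \<bar>y T - b/m\<bar> * exp (- m * (t - T))" if t: "t \<ge> T" for t
  proof -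
    let ?z = "\<lambda>s. (y s - b/m) * exp (m * s)"
    have "?z t - ?z T \<le> 0 * (t - T)"
    proof (rule diff_le_of_deriv_le[OF t])
      show "continuous_on {T..t} ?z"
        using T dy by (intro continuous_intros continuous_on_of_DERIV[of _ y "\<lambda>t. h t - m * y t"]) auto
      fix x assume x: "T < x" "x < t"
      show "(?z has_real_derivative (h x - b) * exp (m * x)) (at x)"
        using dy[of x] x T m by (auto intro!: derivative_eq_intros simp: field_simps)
      show "(h x - b) * exp (m * x) \<le> 0" using T(2)[of x] x by (simp add: mult_nonpos_nonneg)
    qed
    then have "y t - b/m \<le> (y T - b/m) * (exp (m * T) / exp (m * t))"
      by (simp add: field_simps)
    also have "exp (m * T) / exp (m * t) = exp (- m * (t - T))"
      by (simp add: exp_diff[symmetric] algebra_simps)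
    also have "(y T - b/m) * exp (- m * (t - T)) \<le> \<bar>y T - b/m\<bar> * exp (- m * (t - T))"
      by (intro mult_right_mono) auto
    finally show ?thesis .
  qed
  have "((\<lambda>t. \<bar>y T - b/m\<bar> * exp (- m * (t - T))) \<longlongrightarrow> 0) at_top" using m by real_asymp
  then have "\<forall>\<^sub>F t in at_top. \<bar>y T - b/m\<bar> * exp (- m * (t - T)) < e"
    using e by (intro order_tendstoD) auto
  then show ?thesis
    using eventually_ge_at_top[of T] by eventually_elim (use y_le in fastforce)
qed

lemma tendsto_of_linear_ode:
  fixes y h :: "real \<Rightarrow> real"
  assumes m: "m > 0"
    and dy: "\<And>t. t > 0 \<Longrightarrow> (y has_real_derivative h t - m * y t) (at t)"
    and h_lim: "(h \<longlongrightarrow> h0) at_top"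
  shows "(y \<longlongrightarrow> h0 / m) at_top"
proof (rule tendstoI)
  fix e :: real assume e: "e > 0"
  have "\<forall>\<^sub>F t in at_top. h t \<le> h0 + m * e / 2"
    using order_tendstoD(2)[OF h_lim, of "h0 + m * e / 2"] m e by (auto elim: eventually_mono)
  then have up: "\<forall>\<^sub>F t in at_top. y t < (h0 + m * e / 2) / m + e / 2"
    using e by (intro eventually_less_of_linear_ode[OF m dy]) auto
  have "\<forall>\<^sub>F t in at_top. - h t \<le> - h0 + m * e / 2"
    using order_tendstoD(1)[OF h_lim, of "h0 - m * e / 2"] m e by (auto elim: eventually_mono)
  moreover have "((\<lambda>t. - y t) has_real_derivative - h t - m * - y t) (at t)" if "t > 0" for t
    using dy[OF that] by (auto intro!: derivative_eq_intros)
  ultimately have low: "\<forall>\<^sub>F t in at_top. - y t < (- h0 + m * e / 2) / m + e / 2"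
    using e by (intro eventually_less_of_linear_ode[OF m, of _ "\<lambda>t. - h t"]) auto
  show "\<forall>\<^sub>F t in at_top. dist (y t) (h0 / m) < e"
    using up low by eventually_elim (use m in \<open>auto simp: dist_real_def abs_less_iff field_simps\<close>)
qed

lemma first_hitting_time:
  fixes f :: "real \<Rightarrow> real"
  assumes cont: "continuous_on {0..t} f" and "0 \<le> t" "f 0 < r" "r \<le> f t"
  obtains t1 where "0 < t1" "t1 \<le> t" "f t1 = r" "\<And>s. 0 \<le> s \<Longrightarrow> s \<le> t1 \<Longrightarrow> f s \<le> r"
proof -
  have hit: "\<exists>x. 0 \<le> x \<and> x \<le> s \<and> f x = r" if "0 \<le> s" "s \<le> t" "r \<le> f s" for s
    using IVT'[of f 0 r s] continuous_on_subset[OF cont, of "{0..s}"] assms that by auto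
  define A where "A = {0..t} \<inter> f -` {r}"
  have "A \<noteq> {}" using hit[of t] assms by (auto simp: A_def)
  moreover have bdd: "bdd_below A" by (auto simp: A_def intro!: bdd_belowI[of _ 0])
  moreover have "closed A"
    unfolding A_def by (rule continuous_closed_preimage[OF cont]) auto
  ultimately have t1: "Inf A \<in> A" by (rule closed_contains_Inf)
  show ?thesis
  proof (rule that[of "Inf A"])
    show "f (Inf A) = r" "Inf A \<le> t" using t1 by (auto simp: A_def)
    show "0 < Inf A" using t1 assms by (cases "Inf A = 0") (auto simp: A_def)
    fix s assume s: "0 \<le> s" "s \<le> Inf A"
    show "f s \<le> r"
    proof (rule ccontr)
      assume "\<not> f s \<le> r"
      then obtain x where x: "0 \<le> x" "x \<le> s" "f x = r" using hit[of s] s t1 by (auto simp: A_def)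
      then have "Inf A \<le> x" using s t1 bdd by (intro cInf_lower) (auto simp: A_def)
      then have "x = s" using x s by linarith
      then show False using x \<open>\<not> f s \<le> r\<close> by simp
    qed
  qed
qed

lemma abs_mult3_sub_one_le:
  fixes A B C :: real
  assumes "B \<ge> 0" "C \<ge> 0"
  shows "\<bar>A * B * C - 1\<bar> \<le> \<bar>A - 1\<bar> * (B * C) + \<bar>B - 1\<bar> * C + \<bar>C - 1\<bar>"
proof -
  have "A * B * C - 1 = (A - 1) * (B * C) + (B - 1) * C + (C - 1)" by (simp add: algebra_simps)
  moreover have "\<bar>x + y + z\<bar> \<le> \<bar>x\<bar> + \<bar>y\<bar> + \<bar>z\<bar>" for x y z :: real
    by linarith
  ultimately have "\<bar>A * B * C - 1\<bar> \<le> \<bar>(A - 1) * (B * C)\<bar> + \<bar>(B - 1) * C\<bar> + \<bar>C - 1\<bar>"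
    by simp
  then show ?thesis using assms by (simp add: abs_mult)
qed

lemma R0_gt_one_iff:
  assumes "mh > 0" "mv > 0"
  shows "R0 bh bv mh mv Cvh Chv > 1 \<longleftrightarrow> mh^2 * mv < Cvh * Chv * bh"
  using assms by (simp add: R0_def field_simps)

text \<open>Adding the equations pairwise gives \<open>S\<^sub>h + I\<^sub>h = \<beta>\<^sub>h/\<mu>\<^sub>h\<close> and \<open>N\<^sub>v = \<beta>\<^sub>v/\<mu>\<^sub>v\<close>;
  eliminating the remaining unknowns leaves a linear equation for \<open>I\<^sub>h\<close>.\<close>

definition endemic_point ::
  "real \<Rightarrow> real \<Rightarrow> real \<Rightarrow> real \<Rightarrow> real \<Rightarrow> real \<Rightarrow> real \<times> real \<times> real \<times> real" where
  "endemic_point bh bv mh mv Cvh Chv =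
     (let ih = (Cvh * Chv * bh - mh^2 * mv) / (mh * Chv * (Cvh + mh));
          sv = bv / (Chv * ih + mv)
      in (bh / mh - ih, ih, sv, bv / mv - sv))"

lemma endemic_equilibrium_endemic_point:
  fixes bh bv mh mv Cvh Chv :: real
  assumes pos: "bh > 0" "bv > 0" "mh > 0" "mv > 0" "Cvh > 0" "Chv > 0"
    and R0: "R0 bh bv mh mv Cvh Chv > 1"
  shows "endemic_equilibrium bh bv mh mv Cvh Chv (endemic_point bh bv mh mv Cvh Chv)"
proof -
  define x where "x = (Cvh * Chv * bh - mh^2 * mv) / (mh * Chv * (Cvh + mh))"
  define q where "q = Chv * x + mv"
  have "x * (mh * Chv * (Cvh + mh)) = Cvh * Chv * bh - mh^2 * mv"
    using pos by (simp add: x_def)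
  then have x_eq: "Chv * (Cvh + mh) * x = Cvh * Chv * bh / mh - mh * mv"
    using pos by (simp add: field_simps power2_eq_square)
  have x_pos: "x > 0"
    using R0 pos by (simp add: R0_gt_one_iff x_def)
  have q_pos: "q > 0"
    using x_pos pos by (simp add: q_def add_pos_pos)
  have "Cvh * Chv * bh - mh^2 * mv < bh * Chv * (Cvh + mh)"
    using pos by (simp add: algebra_simps power2_eq_square add_pos_pos)
  moreover have "bh / mh * (mh * Chv * (Cvh + mh)) = bh * Chv * (Cvh + mh)" using pos by simp
  ultimately have sh_pos: "bh / mh - x > 0"
    using pos unfolding x_def by (simp add: pos_divide_less_eq)
  have key: "Cvh * Chv * (bh / mh - x) = mh * q"
    using x_eq by (simp add: q_def algebra_simps)
  have iv_eq: "bv / mv - bv / q = bv * Chv * x / (mv * q)"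
    using pos q_pos by (simp add: q_def field_simps)
  have "(bv / mv - bv / q) / (bv / q + (bv / mv - bv / q)) = (bv / mv - bv / q) / (bv / mv)"
    by simp
  also have "\<dots> = Chv * x / q"
    unfolding iv_eq using pos q_pos by (simp add: field_simps)
  finally have ratio: "(bv / mv - bv / q) / (bv / q + (bv / mv - bv / q)) = Chv * x / q" .
  have incidence: "Cvh * (Chv * x / q) * (bh / mh - x) = mh * x"
  proof -
    have "Cvh * (Chv * x / q) * (bh / mh - x) = x * (Cvh * Chv * (bh / mh - x)) / q"
      by simp
    then show ?thesis using key q_pos by simp
  qed
  have point: "endemic_point bh bv mh mv Cvh Chv = (bh / mh - x, x, bv / q, bv / mv - bv / q)"
    by (simp add: endemic_point_def Let_def x_def q_def)
  have "q * (bv / q) = bv" using q_pos by simp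
  then have sv_eq: "Chv * x * (bv / q) + mv * (bv / q) = bv"
    by (simp add: q_def distrib_right add_divide_distrib)
  have "bv / mv - bv / q > 0"
    unfolding iv_eq using pos x_pos q_pos by simp
  then show ?thesis
    unfolding point endemic_equilibrium_def is_equilibrium_def split ratio incidence
    using pos x_pos q_pos sh_pos sv_eq by (simp add: algebra_simps)
qed

lemma endemic_equilibrium_unique:
  fixes bh bv mh mv Cvh Chv :: real
  assumes pos: "bh > 0" "bv > 0" "mh > 0" "mv > 0" "Cvh > 0" "Chv > 0"
    and E: "endemic_equilibrium bh bv mh mv Cvh Chv (sh, ih, sv, iv)"
  shows "(sh, ih, sv, iv) = endemic_point bh bv mh mv Cvh Chv"
proof -
  define q where "q = Chv * ih + mv"
  have E_pos: "sh > 0" "ih > 0" "sv > 0" "iv > 0"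
    using E by (auto simp: endemic_equilibrium_def)
  have e1: "bh - Cvh * (iv / (sv + iv)) * sh - mh * sh = 0"
    and e2: "Cvh * (iv / (sv + iv)) * sh - mh * ih = 0"
    and e3: "bv - Chv * ih * sv - mv * sv = 0"
    and e4: "Chv * ih * sv - mv * iv = 0"
    using E by (auto simp: endemic_equilibrium_def is_equilibrium_def)
  have q_pos: "q > 0" using pos E_pos by (simp add: q_def add_pos_pos)
  have sv_eq: "sv = bv / q" using e3 q_pos by (simp add: q_def field_simps)
  have N_eq: "sv + iv = bv / mv" using e3 e4 pos by (simp add: field_simps)
  have sh_eq: "sh = bh / mh - ih" using e1 e2 pos by (simp add: field_simps)
  have "mh * ih * (sv + iv) = Cvh * iv * sh"
    using e2 E_pos by (simp add: field_simps)
  moreover have "iv = Chv * ih * sv / mv" using e4 pos by (simp add: field_simps)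
  ultimately have "mh * ih * (bv / mv) = Cvh * (Chv * ih * sv / mv) * sh"
    unfolding N_eq by simp
  then have "bv * ih * (mh * q) = bv * ih * (Cvh * Chv * sh)"
    unfolding sv_eq using pos q_pos by (simp add: field_simps)
  then have "mh * q = Cvh * Chv * sh"
    using E_pos pos by simp
  then have "ih * (mh * Chv * (Cvh + mh)) = Cvh * Chv * bh - mh^2 * mv"
    unfolding sh_eq q_def using pos by (simp add: field_simps power2_eq_square)
  then have ih_eq: "ih = (Cvh * Chv * bh - mh^2 * mv) / (mh * Chv * (Cvh + mh))"
    using pos by (simp add: eq_divide_eq)
  show ?thesis
    using N_eq by (simp add: endemic_point_def Let_def ih_eq[symmetric] q_def[symmetric] sv_eq[symmetric] sh_eq)
qed

locale host_vector_endemic =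
  fixes bh bv mh mv Cvh Chv tau sh ih sv iv :: real
  assumes bh_pos: "bh > 0" and bv_pos: "bv > 0" and mh_pos: "mh > 0" and mv_pos: "mv > 0"
    and Cvh_pos: "Cvh > 0" and Chv_pos: "Chv > 0" and tau_nonneg: "tau \<ge> 0"
    and endemic: "endemic_equilibrium bh bv mh mv Cvh Chv (sh, ih, sv, iv)"
begin

lemma sh_pos: "sh > 0" and ih_pos: "ih > 0" and sv_pos: "sv > 0" and iv_pos: "iv > 0"
  using endemic by (auto simp: endemic_equilibrium_def)

lemma equilibrium_eqs:
  "bh - Cvh * (iv / (sv + iv)) * sh - mh * sh = 0"
  "Cvh * (iv / (sv + iv)) * sh - mh * ih = 0"
  "bv - Chv * ih * sv - mv * sv = 0"
  "Chv * ih * sv - mv * iv = 0"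
  using endemic by (auto simp: endemic_equilibrium_def is_equilibrium_def)

definition N :: real where "N = sv + iv"

definition Feq :: real where "Feq = mh * ih"

lemma N_pos: "N > 0" using sv_pos iv_pos by (simp add: N_def)

lemma Feq_pos: "Feq > 0" using mh_pos ih_pos by (simp add: Feq_def)

lemma bh_eq: "bh = Feq + mh * sh"
  using equilibrium_eqs(1,2) by (simp add: Feq_def)

lemma bv_eq: "bv = mv * N"
  using equilibrium_eqs(3,4) by (simp add: N_def algebra_simps)

lemma Cvh_eq: "Cvh * iv * sh = Feq * N"
  using equilibrium_eqs(2) N_pos by (simp add: Feq_def N_def field_simps)

lemma Chv_eq: "Chv * ih * sv = mv * iv"
  using equilibrium_eqs(4) by simp

text \<open>The weight \<open>a\<close> makes the cross terms of the host and vector compartments cancel;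
  \<open>\<alpha>\<close> bounds the perturbation caused by \<open>N\<^sub>v \<noteq> N\<close>, and \<open>c\<close> is chosen so that
  the AM-GM inequality absorbs it into the dissipation of the \<open>S\<^sub>v\<close> and \<open>N\<^sub>v\<close> terms.\<close>

definition a :: real where "a = Feq / (mv * iv)"

definition \<alpha> :: real where "\<alpha> = 2 * Feq / (iv * N)"

definition c :: real where "c = \<alpha>^2 * sv / (2 * a * mv^2)"

definition k :: real where "k = min (mh / (2 * sh)) (a * mv / (4 * sv))"

lemma a_pos: "a > 0" using Feq_pos mv_pos iv_pos by (simp add: a_def)

lemma c_pos: "c > 0" using Feq_pos iv_pos N_pos sv_pos a_pos mv_pos by (simp add: c_def \<alpha>_def)

lemma k_pos: "k > 0" using mh_pos sh_pos a_pos mv_pos sv_pos by (simp add: k_def)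

text \<open>The derivative of the Lyapunov functional along a solution that is at state
  \<open>(S, I, U, V)\<close> and whose delayed incidence is \<open>Q\<close>.\<close>

definition lyapunov_rate :: "real \<Rightarrow> real \<Rightarrow> real \<Rightarrow> real \<Rightarrow> real \<Rightarrow> real" where
  "lyapunov_rate S I U V Q =
     (1 - sh / S) * (bh - Cvh * (V / (U + V)) * S - mh * S) + (1 - ih / I) * (Q - mh * I)
     + a * ((1 - sv / U) * (bv - Chv * I * U - mv * U) + (1 - iv / V) * (Chv * I * U - mv * V))
     + Feq * (volterra (Cvh * V * S / (U + V) / Feq) - volterra (Q / Feq))
     + 2 * c * (U + V - N) * (bv - mv * (U + V))"

lemma ln_incidence_ratio:
  assumes "S > 0" "I > 0" "U > 0" "V > 0" "Q > 0"
  shows "ln (Cvh * V * S / (U + V) / Feq) + (ln (sh / S) + ln (sv / U) + ln (Q * ih / (Feq * I))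
           + ln (I * U * iv / (ih * sv * V)) + ln ((U + V) / N)) = ln (Q / Feq)"
proof -
  have pos: "Cvh * V * S / (U + V) / Feq > 0" "sh / S > 0" "sv / U > 0" "Q * ih / (Feq * I) > 0"
    "I * U * iv / (ih * sv * V) > 0" "(U + V) / N > 0"
    using assms Cvh_pos Feq_pos sh_pos ih_pos sv_pos iv_pos N_pos by simp_all
  define Nv where "Nv = U + V"
  have "Nv > 0" using assms by (simp add: Nv_def)
  then have "Cvh * V * S / Nv / Feq * (sh / S * (sv / U) * (Q * ih / (Feq * I))
          * (I * U * iv / (ih * sv * V)) * (Nv / N)) = Cvh * iv * sh * Q / (Feq * Feq * N)"
    using assms sh_pos ih_pos sv_pos iv_pos N_pos Feq_pos by (simp add: field_simps)
  also have "\<dots> = Q / Feq"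
    unfolding Cvh_eq using Feq_pos N_pos by simp
  finally have prod: "Cvh * V * S / (U + V) / Feq * (sh / S * (sv / U) * (Q * ih / (Feq * I))
          * (I * U * iv / (ih * sv * V)) * ((U + V) / N)) = Q / Feq"
    unfolding Nv_def .
  have ln6: "ln (x1 * (x2 * x3 * x4 * x5 * x6)) = ln x1 + (ln x2 + ln x3 + ln x4 + ln x5 + ln x6)"
    if "x1 > 0" "x2 > 0" "x3 > 0" "x4 > 0" "x5 > 0" "x6 > 0" for x1 x2 x3 x4 x5 x6 :: real
    using that by (simp add: ln_mult)
  show ?thesis
    using ln6[OF pos] unfolding prod by simp
qed

lemma vector_rate_eq:
  assumes U: "U > 0" and V: "V > 0"
  shows "a * ((1 - sv / U) * (bv - Chv * I * U - mv * U) + (1 - iv / V) * (Chv * I * U - mv * V))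
    = - a * mv * (U - sv)^2 / U + Feq * (2 - sv / U + I / ih - V / iv - I * U * iv / (ih * sv * V))"
proof -
  define H where "H = I * U / (ih * sv)"
  have aChv: "a * Chv * I * U = Feq * H"
    using Chv_eq ih_pos sv_pos mv_pos iv_pos by (simp add: a_def H_def field_simps)
  have amv: "a * mv * iv = Feq" using mv_pos iv_pos by (simp add: a_def)
  have vector_S: "a * ((1 - sv / U) * (bv - Chv * I * U - mv * U))
      = - a * mv * (U - sv)^2 / U + Feq * (1 - sv / U - H + I / ih)"
  proof -
    have "a * ((1 - x) * (bv - Chv * I * U - mv * U))
        = a * mv * ((1 - x) * (sv - U)) + (1 - x) * (a * mv * iv - a * Chv * I * U)" for x
      unfolding bv_eq N_def by (simp add: algebra_simps)
    moreover have "(1 - sv / U) * (sv - U) = - ((U - sv)^2 / U)"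
      using U by (simp add: field_simps power2_eq_square)
    moreover have "(1 - x) * (Feq - Feq * H) = Feq * (1 - x - H + H * x)" for x
      by (simp add: algebra_simps)
    moreover have "H * (sv / U) = I / ih" using U sv_pos by (simp add: H_def field_simps)
    ultimately show ?thesis
      unfolding amv aChv by simp
  qed
  have vector_I: "a * ((1 - iv / V) * (Chv * I * U - mv * V))
      = Feq * (H - V / iv - I * U * iv / (ih * sv * V) + 1)"
  proof -
    have aChv': "a * Chv = Feq / (ih * sv)" and amv': "a * mv = Feq / iv"
      using Chv_eq mv_pos ih_pos sv_pos iv_pos by (simp_all add: a_def field_simps)
    have "a * ((1 - iv / V) * (Chv * I * U - mv * V)) = (1 - iv / V) * (a * Chv * I * U - a * mv * V)"
      by (simp add: algebra_simps)
    also have "\<dots> = (1 - iv / V) * (Feq / (ih * sv) * I * U - Feq / iv * V)"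
      by (simp only: aChv' amv')
    also have "\<dots> = Feq * (H - V / iv - I * U * iv / (ih * sv * V) + 1)"
      using V iv_pos ih_pos sv_pos by (simp add: H_def field_simps)
    finally show ?thesis .
  qed
  show ?thesis
    unfolding distrib_left vector_S vector_I by (simp add: algebra_simps)
qed

lemma lyapunov_rate_eq:
  assumes S: "S > 0" and I: "I > 0" and U: "U > 0" and V: "V > 0" and Q: "Q > 0"
  shows "lyapunov_rate S I U V Q =
     - mh * (S - sh)^2 / S - a * mv * (U - sv)^2 / U - 2 * c * mv * (U + V - N)^2
     + Feq * ((V / iv) * (N / (U + V) - 1) + (U + V) / N - 1)
     - Feq * (volterra (sh / S) + volterra (sv / U) + volterra (Q * ih / (Feq * I))
              + volterra (I * U * iv / (ih * sv * V)) + volterra ((U + V) / N))"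
proof -
  define Nv where "Nv = U + V"
  define P where "P = Cvh * V * S / Nv"
  have Nv: "Nv > 0" using U V by (simp add: Nv_def)
  have "P * (sh / S) = Cvh * iv * sh * V / (iv * Nv)"
    using S iv_pos Nv by (simp add: P_def field_simps)
  then have P_sh: "P * (sh / S) = Feq * (V / iv) * (N / Nv)"
    unfolding Cvh_eq by simp
  have "Cvh * (V / Nv) * S = P" by (simp add: P_def)
  then have host_S: "(1 - sh / S) * (bh - Cvh * (V / Nv) * S - mh * S)
      = - mh * (S - sh)^2 / S + Feq - P - Feq * (sh / S) + P * (sh / S)"
    using S by (simp add: bh_eq field_simps power2_eq_square)
  have host_I: "(1 - ih / I) * (Q - mh * I) = Q - Feq * (I / ih) - Feq * (Q * ih / (Feq * I)) + Feq"
    using I ih_pos mh_pos by (simp add: Feq_def field_simps)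
  have total: "2 * c * (Nv - N) * (bv - mv * Nv) = - 2 * c * mv * (Nv - N)^2"
    unfolding bv_eq by (simp add: algebra_simps power2_eq_square)
  have delay: "Feq * (volterra (P / Feq) - volterra (Q / Feq))
      = P - Q - Feq * ln (P / Feq) + Feq * ln (Q / Feq)"
    using Feq_pos by (simp add: volterra_def algebra_simps)
  have ln: "ln (P / Feq) = ln (Q / Feq) - (ln (sh / S) + ln (sv / U) + ln (Q * ih / (Feq * I))
      + ln (I * U * iv / (ih * sv * V)) + ln (Nv / N))"
    using ln_incidence_ratio[OF S I U V Q] by (simp add: P_def Nv_def)
  show ?thesis
    unfolding lyapunov_rate_def vector_rate_eq[OF U V] Nv_def[symmetric] host_S host_I total
    unfolding P_def[symmetric] delay ln P_sh
    by (simp add: volterra_def algebra_simps diff_divide_distrib)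
qed

lemma incidence_perturbation_le:
  assumes U: "U > 0" and V: "V > 0" and UV: "U + V \<ge> N / 2"
  shows "Feq * ((V / iv) * (N / (U + V) - 1) + (U + V) / N - 1) \<le> \<alpha> * \<bar>(U + V - N) * (U - sv)\<bar>"
proof -
  define Nv where "Nv = U + V"
  define d where "d = Nv - N"
  define e where "e = U - sv"
  have Nv: "Nv > 0" using U V by (simp add: Nv_def)
  have "iv * Nv - V * N = N * e - sv * d"
    by (simp add: Nv_def d_def e_def N_def algebra_simps)
  moreover have "(V / iv) * (N / Nv - 1) + Nv / N - 1 = d * (iv * Nv - V * N) / (N * iv * Nv)"
    using Nv N_pos iv_pos by (simp add: d_def field_simps)
  ultimately have "Feq * ((V / iv) * (N / Nv - 1) + Nv / N - 1)
      = Feq * (d * (N * e - sv * d) / (N * iv * Nv))"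
    by simp
  also have "\<dots> = Feq * (d * e) / (iv * Nv) - Feq * sv * d^2 / (N * iv * Nv)"
    using Nv N_pos iv_pos by (simp add: field_simps power2_eq_square)
  also have "\<dots> \<le> Feq * \<bar>d * e\<bar> / (iv * Nv)"
  proof -
    have "0 \<le> Feq * sv * d^2 / (N * iv * Nv)"
      using Feq_pos sv_pos N_pos iv_pos Nv by simp
    moreover have "Feq * (d * e) / (iv * Nv) \<le> Feq * \<bar>d * e\<bar> / (iv * Nv)"
      using Feq_pos iv_pos Nv by (intro divide_right_mono mult_left_mono) auto
    ultimately show ?thesis by (simp add: algebra_simps add_increasing2)
  qed
  also have "\<dots> \<le> Feq * \<bar>d * e\<bar> / (iv * (N / 2))"
    using Feq_pos iv_pos N_pos UV unfolding Nv_def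
    by (intro divide_left_mono mult_left_mono mult_pos_pos) auto
  also have "\<dots> = \<alpha> * \<bar>d * e\<bar>" by (simp add: \<alpha>_def)
  finally show ?thesis by (simp add: Nv_def d_def e_def)
qed

lemma cross_term_le: "\<alpha> * \<bar>d * e\<bar> \<le> a * mv / (4 * sv) * e^2 + 2 * c * mv * d^2"
proof -
  define \<beta> where "\<beta> = a * mv / (4 * sv)"
  have \<beta>: "\<beta> > 0" using a_pos mv_pos sv_pos by (simp add: \<beta>_def)
  have "0 \<le> (\<beta> * \<bar>e\<bar> - \<alpha> * \<bar>d\<bar> / 2)^2" by simp
  then have "\<alpha> * \<bar>d * e\<bar> \<le> \<beta> * e^2 + \<alpha>^2 * d^2 / (4 * \<beta>)"
    using \<beta> by (simp add: field_simps power2_eq_square abs_mult)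
  also have "\<alpha>^2 * d^2 / (4 * \<beta>) = 2 * c * mv * d^2"
    using a_pos mv_pos sv_pos by (simp add: \<beta>_def c_def field_simps power2_eq_square)
  finally show ?thesis unfolding \<beta>_def .
qed

lemma lyapunov_rate_le:
  assumes S: "S > 0" "S \<le> 2 * sh" and I: "I > 0" and U: "U > 0" "U \<le> 2 * sv"
    and V: "V > 0" and Q: "Q > 0" and UV: "U + V \<ge> N / 2"
  shows "lyapunov_rate S I U V Q \<le> - k * ((S - sh)^2 + (U - sv)^2)"
proof -
  define d where "d = U + V - N"
  define e where "e = U - sv"
  define \<beta> where "\<beta> = a * mv / (4 * sv)"
  have \<beta>: "\<beta> > 0" using a_pos mv_pos sv_pos by (simp add: \<beta>_def)
  have volterra_sum: "0 \<le> volterra (sh / S) + volterra (sv / U) + volterra (Q * ih / (Feq * I))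
      + volterra (I * U * iv / (ih * sv * V)) + volterra ((U + V) / N)"
    using S I U V Q sh_pos ih_pos sv_pos iv_pos Feq_pos N_pos by (intro add_nonneg_nonneg volterra_nonneg) simp_all
  have amgm: "\<alpha> * \<bar>d * e\<bar> \<le> \<beta> * e^2 + 2 * c * mv * d^2"
    unfolding \<beta>_def by (rule cross_term_le)
  have S_term: "mh * (S - sh)^2 / (2 * sh) \<le> mh * (S - sh)^2 / S"
    using S mh_pos by (intro divide_left_mono mult_nonneg_nonneg) auto
  have U_term: "2 * \<beta> * e^2 \<le> a * mv * e^2 / U"
  proof -
    have "2 * \<beta> * e^2 = a * mv * e^2 / (2 * sv)" using sv_pos by (simp add: \<beta>_def field_simps)
    also have "\<dots> \<le> a * mv * e^2 / U"
      using U a_pos mv_pos by (intro divide_left_mono mult_nonneg_nonneg) auto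
    finally show ?thesis .
  qed
  have k_bound: "k * ((S - sh)^2 + e^2) \<le> mh * (S - sh)^2 / (2 * sh) + \<beta> * e^2"
  proof -
    have "k * (S - sh)^2 \<le> mh / (2 * sh) * (S - sh)^2"
      by (intro mult_right_mono) (auto simp: k_def)
    moreover have "k * e^2 \<le> \<beta> * e^2"
      by (intro mult_right_mono) (auto simp: k_def \<beta>_def)
    ultimately show ?thesis by (simp add: distrib_left)
  qed
  have "0 \<le> Feq * (volterra (sh / S) + volterra (sv / U) + volterra (Q * ih / (Feq * I))
      + volterra (I * U * iv / (ih * sv * V)) + volterra ((U + V) / N))"
    using Feq_pos volterra_sum by simp
  then show ?thesis
    unfolding lyapunov_rate_eq[OF S(1) I U(1) V Q]
    using incidence_perturbation_le[OF U(1) V UV] amgm S_term U_term k_bound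
    unfolding d_def[symmetric] e_def[symmetric] by linarith
qed

text \<open>Within \<open>near_radius\<close> of the equilibrium every component differs from its equilibrium
  value by at most a twentieth, which keeps all estimates on the Lyapunov functional valid.\<close>

definition near_radius :: real where
  "near_radius = min (min sh ih) (min sv iv) / 20"

definition lower_coeff :: real where
  "lower_coeff = min (min (1 / (4 * sh)) (1 / (4 * ih))) (min (a / (4 * sv)) (a / (4 * iv)))"

definition incidence_lip :: real where
  "incidence_lip = 2 / iv + 2 / sh + 4 / N"

definition upper_coeff :: real where
  "upper_coeff = 2 / sh + 2 / ih + a * (2 / sv + 2 / iv) + Feq * tau * (2 * incidence_lip^2) + 4 * c"

definition initial_factor :: real where
  "initial_factor = min (1 / 2) (lower_coeff / (2 * upper_coeff))"

lemma near_radius_pos: "near_radius > 0"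
  using sh_pos ih_pos sv_pos iv_pos by (simp add: near_radius_def)

lemma near_radius_le: "near_radius \<le> sh / 20" "near_radius \<le> ih / 20"
  "near_radius \<le> sv / 20" "near_radius \<le> iv / 20"
  by (auto simp: near_radius_def)

lemma lower_coeff_pos: "lower_coeff > 0"
  using sh_pos ih_pos sv_pos iv_pos a_pos by (simp add: lower_coeff_def)

lemma upper_coeff_pos: "upper_coeff > 0"
proof -
  have "Feq * tau * (2 * incidence_lip^2) \<ge> 0" using Feq_pos tau_nonneg by simp
  moreover have "a * (2 / sv + 2 / iv) > 0"
    using sv_pos iv_pos a_pos by (intro mult_pos_pos add_pos_pos divide_pos_pos) auto
  moreover have "2 / sh > 0" "2 / ih > 0" "4 * c > 0" using sh_pos ih_pos c_pos by auto
  ultimately show ?thesis unfolding upper_coeff_def by linarith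
qed

lemma initial_factor_pos: "initial_factor > 0"
  using lower_coeff_pos upper_coeff_pos by (simp add: initial_factor_def)

lemma initial_factor_le: "initial_factor \<le> 1 / 2"
  by (simp add: initial_factor_def)

end

locale endemic_solution = host_vector_endemic +
  fixes Sh Ih Sv Iv :: "real \<Rightarrow> real"
  assumes solution: "is_solution bh bv mh mv Cvh Chv tau Sh Ih Sv Iv"
begin

definition dev :: "real \<Rightarrow> real" where
  "dev t = max (max \<bar>Sh t - sh\<bar> \<bar>Ih t - ih\<bar>) (max \<bar>Sv t - sv\<bar> \<bar>Iv t - iv\<bar>)"

definition delayed_incidence :: "real \<Rightarrow> real" where
  "delayed_incidence t = Cvh * (Iv (t - tau) / (Sv (t - tau) + Iv (t - tau))) * Sh (t - tau)"

text \<open>Up to the factor \<open>Feq\<close>, the delay term of the Lyapunov functional integrates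
  \<open>volterra (F(s) / Feq)\<close> for the incidence \<open>F = C\<^sub>v\<^sub>h I\<^sub>v S\<^sub>h / N\<^sub>v\<close>. The integrand is
  clamped (time to \<open>s \<ge> -\<tau>\<close>, \<open>N\<^sub>v\<close> from below, the ratio to \<open>[1/2, 2]\<close>) so that it is
  continuous on all of \<open>\<real>\<close>; near the equilibrium none of the clamps is active.\<close>

definition delay_integrand :: "real \<Rightarrow> real" where
  "delay_integrand s =
     (let s' = max s (-tau)
      in volterra (max (1/2) (min (Cvh * Iv s' * Sh s' / max (Sv s' + Iv s') (N / 2) / Feq) 2)))"

definition delay_integral :: "real \<Rightarrow> real" where
  "delay_integral t = integral {-tau - 1..t} delay_integrand"

definition W :: "real \<Rightarrow> real" where
  "W t = sh * volterra (Sh t / sh) + ih * volterra (Ih t / ih)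
     + a * (sv * volterra (Sv t / sv) + iv * volterra (Iv t / iv))
     + Feq * (delay_integral t - delay_integral (t - tau)) + c * (Sv t + Iv t - N)^2"

lemma continuous_on_solution:
  "continuous_on {-tau..} Sh" "continuous_on {-tau..} Ih"
  "continuous_on {-tau..} Sv" "continuous_on {-tau..} Iv"
  using solution by (auto simp: is_solution_def)

lemma solution_derivs:
  assumes "t > 0"
  shows "(Sh has_real_derivative (bh - Cvh * (Iv t / (Sv t + Iv t)) * Sh t - mh * Sh t)) (at t)"
    "(Ih has_real_derivative (delayed_incidence t - mh * Ih t)) (at t)"
    "(Sv has_real_derivative (bv - Chv * Ih t * Sv t - mv * Sv t)) (at t)"
    "(Iv has_real_derivative (Chv * Ih t * Sv t - mv * Iv t)) (at t)"
  using solution assms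
  by (auto simp: is_solution_def delayed_incidence_def intro!: has_real_derivative_at_of_within_atLeast)

lemma continuous_on_dev: "continuous_on {-tau..} dev"
  unfolding dev_def using continuous_on_solution by (intro continuous_intros) auto

lemma near_bounds:
  assumes "dev s \<le> near_radius"
  shows "19/20 * sh \<le> Sh s" "Sh s \<le> 21/20 * sh" "19/20 * ih \<le> Ih s" "Ih s \<le> 21/20 * ih"
    "19/20 * sv \<le> Sv s" "Sv s \<le> 21/20 * sv" "19/20 * iv \<le> Iv s" "Iv s \<le> 21/20 * iv"
    "19/20 * N \<le> Sv s + Iv s" "Sv s + Iv s \<le> 21/20 * N"
  using assms near_radius_le by (auto simp: dev_def N_def abs_le_iff)

lemma near_pos:
  assumes "dev s \<le> near_radius"
  shows "Sh s > 0" "Ih s > 0" "Sv s > 0" "Iv s > 0" "Sv s + Iv s \<ge> N / 2"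
    "Sh s \<le> 2 * sh" "Ih s \<le> 2 * ih" "Sv s \<le> 2 * sv" "Iv s \<le> 2 * iv"
    "Sh s \<ge> sh / 2" "Ih s \<ge> ih / 2" "Sv s \<ge> sv / 2" "Iv s \<ge> iv / 2"
  using near_bounds[OF assms] sh_pos ih_pos sv_pos iv_pos N_pos by auto

lemma incidence_ratio_eq:
  assumes "dev s \<le> near_radius"
  shows "Cvh * Iv s * Sh s / (Sv s + Iv s) / Feq = (Iv s / iv) * (Sh s / sh) * (N / (Sv s + Iv s))"
proof -
  have Feq_eq: "Feq = Cvh * iv * sh / N" using Cvh_eq N_pos by (simp add: field_simps)
  have "Cvh * x * y / n / Feq = (x / iv) * (y / sh) * (N / n)" if "n > 0" for x y n
    using that iv_pos sh_pos N_pos Cvh_pos unfolding Feq_eq by (simp add: field_simps)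
  then show ?thesis using near_pos[OF assms] by simp
qed

lemma incidence_ratio_bounds:
  assumes "dev s \<le> near_radius"
  shows "1/2 \<le> Cvh * Iv s * Sh s / (Sv s + Iv s) / Feq" "Cvh * Iv s * Sh s / (Sv s + Iv s) / Feq \<le> 2"
proof -
  note b = near_bounds[OF assms]
  have "Sv s + Iv s > 0" using near_pos[OF assms] by simp
  then have A: "19/20 \<le> Iv s / iv" "Iv s / iv \<le> 21/20" and B: "19/20 \<le> Sh s / sh" "Sh s / sh \<le> 21/20"
    and C: "20/21 \<le> N / (Sv s + Iv s)" "N / (Sv s + Iv s) \<le> 20/19"
    using b iv_pos sh_pos N_pos by (auto simp: field_simps)
  have "(19/20) * (19/20) * (20/21) \<le> (Iv s / iv) * (Sh s / sh) * (N / (Sv s + Iv s))"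
    using A B C iv_pos sh_pos N_pos near_pos[OF assms] by (intro mult_mono) auto
  then show "1/2 \<le> Cvh * Iv s * Sh s / (Sv s + Iv s) / Feq"
    unfolding incidence_ratio_eq[OF assms] by linarith
  have "(Iv s / iv) * (Sh s / sh) * (N / (Sv s + Iv s)) \<le> (21/20) * (21/20) * (20/19)"
    using A B C iv_pos sh_pos N_pos near_pos[OF assms] by (intro mult_mono) auto
  then show "Cvh * Iv s * Sh s / (Sv s + Iv s) / Feq \<le> 2"
    unfolding incidence_ratio_eq[OF assms] by linarith
qed

lemma delay_integrand_eq:
  assumes "s \<ge> -tau" "dev s \<le> near_radius"
  shows "delay_integrand s = volterra (Cvh * Iv s * Sh s / (Sv s + Iv s) / Feq)"
proof -
  have "max s (-tau) = s" "max (Sv s + Iv s) (N / 2) = Sv s + Iv s"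
    using assms near_pos[OF assms(2)] by auto
  then show ?thesis
    using incidence_ratio_bounds[OF assms(2)] by (simp add: delay_integrand_def Let_def)
qed

lemma delay_integrand_nonneg: "delay_integrand s \<ge> 0"
  unfolding delay_integrand_def Let_def by (rule volterra_nonneg) simp

lemma continuous_delay_integrand: "continuous_on UNIV delay_integrand"
proof -
  have "continuous_on UNIV (\<lambda>s. max s (-tau))" "(\<lambda>s. max s (-tau)) ` UNIV \<subseteq> {-tau..}"
    by (auto intro!: continuous_intros)
  then have clamp: "continuous_on UNIV (\<lambda>s. f (max s (-tau)))" if "continuous_on {-tau..} f" for f
    using continuous_on_compose2[OF that] by blast
  show ?thesis
    unfolding delay_integrand_def Let_def volterra_def
    using clamp[OF continuous_on_solution(1)] clamp[OF continuous_on_solution(3)]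
      clamp[OF continuous_on_solution(4)] N_pos Feq_pos
    by (intro continuous_intros) auto
qed

lemma delay_integral_deriv:
  assumes "t > -tau - 1"
  shows "(delay_integral has_real_derivative delay_integrand t) (at t)"
proof -
  have "(delay_integral has_real_derivative delay_integrand t) (at t within {-tau - 1..t + 1})"
    unfolding delay_integral_def using assms
    by (intro integral_has_real_derivative continuous_on_subset[OF continuous_delay_integrand]) auto
  then have "(delay_integral has_real_derivative delay_integrand t) (at t within {-tau - 1<..<t + 1})"
    by (rule DERIV_subset) auto
  then show ?thesis using at_within_open[of t "{-tau - 1<..<t + 1}"] assms by auto
qed

lemma delay_integral_diff_nonneg:
  assumes "t \<ge> 0"
  shows "delay_integral t - delay_integral (t - tau) \<ge> 0"
proof -
  have "delay_integral (t - tau) \<le> delay_integral t"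
  proof (rule DERIV_nonneg_imp_increasing_open[of "t - tau" t delay_integral])
    show "continuous_on {t - tau..t} delay_integral"
      using assms delay_integral_deriv
      by (intro continuous_on_of_DERIV[of _ delay_integral delay_integrand]) auto
    fix x assume "t - tau < x" "x < t"
    then show "\<exists>y. (delay_integral has_real_derivative y) (at x) \<and> y \<ge> 0"
      using assms delay_integral_deriv[of x] delay_integrand_nonneg[of x] by auto
  qed (use tau_nonneg in auto)
  then show ?thesis by simp
qed

lemma delay_integral_diff_le:
  assumes "\<And>s. -tau < s \<Longrightarrow> s < 0 \<Longrightarrow> delay_integrand s \<le> G"
  shows "delay_integral 0 - delay_integral (- tau) \<le> G * tau"
proof -
  have "delay_integral 0 - delay_integral (- tau) \<le> G * (0 - (- tau))"
    using assms tau_nonneg delay_integral_deriv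
    by (intro diff_le_of_deriv_le[of "- tau" 0 delay_integral delay_integrand]
        continuous_on_of_DERIV[of _ delay_integral delay_integrand]) auto
  then show ?thesis by simp
qed

lemma W_has_derivative:
  assumes t: "t > 0" and near: "dev t \<le> near_radius" "dev (t - tau) \<le> near_radius"
  shows "(W has_real_derivative lyapunov_rate (Sh t) (Ih t) (Sv t) (Iv t) (delayed_incidence t)) (at t)"
proof -
  note p = near_pos[OF near(1)] and d = solution_derivs[OF t]
  have delay: "((\<lambda>x. delay_integral x - delay_integral (x - tau)) has_real_derivative
      delay_integrand t - delay_integrand (t - tau)) (at t)"
    using delay_integral_deriv[of t] delay_integral_deriv[of "t - tau"] t tau_nonneg
      DERIV_shift[of delay_integral "delay_integrand (t - tau)" t "- tau"]
    by (intro DERIV_diff) auto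
  have "delay_integrand t = volterra (Cvh * Iv t * Sh t / (Sv t + Iv t) / Feq)"
    using delay_integrand_eq[OF _ near(1)] t tau_nonneg by simp
  moreover have "delay_integrand (t - tau) = volterra (delayed_incidence t / Feq)"
    using delay_integrand_eq[OF _ near(2)] t by (simp add: delayed_incidence_def)
  ultimately have "(W has_real_derivative
      (1 - sh / Sh t) * (bh - Cvh * (Iv t / (Sv t + Iv t)) * Sh t - mh * Sh t)
      + (1 - ih / Ih t) * (delayed_incidence t - mh * Ih t)
      + a * ((1 - sv / Sv t) * (bv - Chv * Ih t * Sv t - mv * Sv t)
             + (1 - iv / Iv t) * (Chv * Ih t * Sv t - mv * Iv t))
      + Feq * (volterra (Cvh * Iv t * Sh t / (Sv t + Iv t) / Feq) - volterra (delayed_incidence t / Feq))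
      + c * (2 * (Sv t + Iv t - N) * ((bv - Chv * Ih t * Sv t - mv * Sv t) + (Chv * Ih t * Sv t - mv * Iv t))))
      (at t)"
    unfolding W_def[abs_def] using delay d p sh_pos ih_pos sv_pos iv_pos
    by (intro DERIV_add DERIV_cmult has_real_derivative_scaled_volterra) (auto intro!: derivative_eq_intros)
  then show ?thesis
    by (rule DERIV_cong) (simp add: lyapunov_rate_def algebra_simps)
qed

lemma lyapunov_rate_along_le:
  assumes t: "t > 0" and near: "dev t \<le> near_radius" "dev (t - tau) \<le> near_radius"
  shows "lyapunov_rate (Sh t) (Ih t) (Sv t) (Iv t) (delayed_incidence t)
    \<le> - k * ((Sh t - sh)^2 + (Sv t - sv)^2)"
proof -
  have "delayed_incidence t > 0"
    using near_pos[OF near(2)] Cvh_pos by (simp add: delayed_incidence_def)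
  then show ?thesis
    using near_pos[OF near(1)] by (intro lyapunov_rate_le) auto
qed

lemma W_ge:
  assumes "t \<ge> 0" "dev t \<le> near_radius"
  shows "lower_coeff * (dev t)^2 \<le> W t"
proof -
  note p = near_pos[OF assms(2)]
  have scaled: "q * (X - x)^2 \<le> x * volterra (X / x)"
    if "q \<le> 1 / (4 * x)" "x > 0" "X > 0" "X \<le> 2 * x" for q x X
  proof -
    have "q * (X - x)^2 \<le> 1 / (4 * x) * (X - x)^2" using that by (intro mult_right_mono) auto
    then show ?thesis using scaled_volterra_ge[OF that(2-4)] by simp
  qed
  have "lower_coeff / a \<le> 1 / (4 * sv)" "lower_coeff / a \<le> 1 / (4 * iv)"
    using a_pos by (auto simp: lower_coeff_def field_simps)
  then have "lower_coeff / a * (Sv t - sv)^2 \<le> sv * volterra (Sv t / sv)"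
    "lower_coeff / a * (Iv t - iv)^2 \<le> iv * volterra (Iv t / iv)"
    using scaled[of "lower_coeff / a" sv "Sv t"] scaled[of "lower_coeff / a" iv "Iv t"]
      p sv_pos iv_pos by auto
  then have vec: "lower_coeff * (Sv t - sv)^2 \<le> a * (sv * volterra (Sv t / sv))"
    "lower_coeff * (Iv t - iv)^2 \<le> a * (iv * volterra (Iv t / iv))"
    using mult_left_mono[of _ _ a] a_pos by (auto simp: field_simps)
  have host: "lower_coeff * (Sh t - sh)^2 \<le> sh * volterra (Sh t / sh)"
    "lower_coeff * (Ih t - ih)^2 \<le> ih * volterra (Ih t / ih)"
    using scaled[of lower_coeff sh "Sh t"] scaled[of lower_coeff ih "Ih t"] p sh_pos ih_pos
    by (auto simp: lower_coeff_def)
  have "dev t = \<bar>Sh t - sh\<bar> \<or> dev t = \<bar>Ih t - ih\<bar> \<or> dev t = \<bar>Sv t - sv\<bar> \<or> dev t = \<bar>Iv t - iv\<bar>"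
    by (simp add: dev_def max_def)
  then have "(dev t)^2 \<le> (Sh t - sh)^2 + (Ih t - ih)^2 + (Sv t - sv)^2 + (Iv t - iv)^2"
    using zero_le_power2[of "Sh t - sh"] zero_le_power2[of "Ih t - ih"]
      zero_le_power2[of "Sv t - sv"] zero_le_power2[of "Iv t - iv"]
    by (elim disjE) simp_all
  then have "lower_coeff * (dev t)^2
      \<le> lower_coeff * ((Sh t - sh)^2 + (Ih t - ih)^2 + (Sv t - sv)^2 + (Iv t - iv)^2)"
    using lower_coeff_pos by (intro mult_left_mono) auto
  also have "\<dots> \<le> W t"
  proof -
    have "0 \<le> Feq * (delay_integral t - delay_integral (t - tau))"
      using delay_integral_diff_nonneg[OF assms(1)] Feq_pos by simp
    moreover have "0 \<le> c * (Sv t + Iv t - N)^2" using c_pos by simp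
    ultimately show ?thesis
      using vec host unfolding W_def by (simp add: distrib_left)
  qed
  finally show ?thesis .
qed

lemma incidence_ratio_near_one:
  assumes "dev s < \<delta>" "\<delta> \<le> near_radius"
  shows "\<bar>Cvh * Iv s * Sh s / (Sv s + Iv s) / Feq - 1\<bar> \<le> incidence_lip * \<delta>"
proof -
  have near: "dev s \<le> near_radius" using assms by simp
  note b = near_bounds[OF near] and p = near_pos[OF near]
  have d: "\<bar>Sh s - sh\<bar> \<le> \<delta>" "\<bar>Iv s - iv\<bar> \<le> \<delta>" "\<bar>Sv s - sv\<bar> \<le> \<delta>"
    using assms(1) by (auto simp: dev_def)
  have Nv: "Sv s + Iv s > 0" using p by simp
  have rel: "\<bar>X / x - 1\<bar> \<le> \<delta> / x" if "x > 0" "\<bar>X - x\<bar> \<le> \<delta>" for X x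
  proof -
    have "X / x - 1 = (X - x) / x" using that by (simp add: field_simps)
    then show ?thesis using that by (simp add: abs_divide divide_right_mono)
  qed
  have A: "\<bar>Iv s / iv - 1\<bar> \<le> \<delta> / iv" using rel d iv_pos by simp
  have B: "\<bar>Sh s / sh - 1\<bar> \<le> \<delta> / sh" using rel d sh_pos by simp
  have "N / (Sv s + Iv s) - 1 = (N - (Sv s + Iv s)) / (Sv s + Iv s)"
    using Nv by (simp add: field_simps)
  then have "\<bar>N / (Sv s + Iv s) - 1\<bar> = \<bar>N - (Sv s + Iv s)\<bar> / (Sv s + Iv s)"
    using Nv by (simp add: abs_divide)
  also have "\<dots> \<le> (2 * \<delta>) / (N / 2)"
    using d b Nv N_pos unfolding N_def by (intro frac_le) auto
  finally have C: "\<bar>N / (Sv s + Iv s) - 1\<bar> \<le> 4 * \<delta> / N" by simp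
  have BC: "0 \<le> Sh s / sh" "Sh s / sh \<le> 21/20" "0 \<le> N / (Sv s + Iv s)" "N / (Sv s + Iv s) \<le> 20/19"
    using b p sh_pos N_pos by (auto simp: field_simps)
  then have "(Sh s / sh) * (N / (Sv s + Iv s)) \<le> (21/20) * (20/19)"
    by (intro mult_mono) auto
  then have "(Sh s / sh) * (N / (Sv s + Iv s)) \<le> 2" by linarith
  moreover have "0 \<le> \<delta>" using assms(1) by (auto simp: dev_def)
  ultimately have T1: "\<bar>Iv s / iv - 1\<bar> * ((Sh s / sh) * (N / (Sv s + Iv s))) \<le> (\<delta> / iv) * 2"
    using A BC iv_pos by (intro mult_mono mult_nonneg_nonneg) auto
  have T2: "\<bar>Sh s / sh - 1\<bar> * (N / (Sv s + Iv s)) \<le> (\<delta> / sh) * 2"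
  proof (rule mult_mono)
    show "N / (Sv s + Iv s) \<le> 2" using BC(4) by linarith
  qed (use B BC(3) sh_pos \<open>0 \<le> \<delta>\<close> in auto)
  have "\<bar>(Iv s / iv) * (Sh s / sh) * (N / (Sv s + Iv s)) - 1\<bar> \<le> (\<delta> / iv) * 2 + (\<delta> / sh) * 2 + 4 * \<delta> / N"
    using abs_mult3_sub_one_le[OF BC(1) BC(3), of "Iv s / iv"] T1 T2 C by linarith
  then show ?thesis
    unfolding incidence_ratio_eq[OF near] incidence_lip_def by (simp add: algebra_simps)
qed

lemma W0_le:
  assumes \<delta>: "0 < \<delta>" "\<delta> \<le> near_radius" and init: "\<And>\<theta>. -tau \<le> \<theta> \<Longrightarrow> \<theta> \<le> 0 \<Longrightarrow> dev \<theta> < \<delta>"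
  shows "W 0 \<le> upper_coeff * \<delta>^2"
proof -
  have d0: "dev 0 < \<delta>" using init tau_nonneg by auto
  note p = near_pos[of 0] and d = d0[unfolded dev_def]
  have scaled: "x * volterra (X / x) \<le> 2 * \<delta>^2 / x" if "x > 0" "X \<ge> x / 2" "\<bar>X - x\<bar> < \<delta>" for x X
    using scaled_volterra_le[of x X \<delta>] that by simp
  have vector: "a * (sv * volterra (Sv 0 / sv) + iv * volterra (Iv 0 / iv)) \<le> a * (2 * \<delta>^2 / sv + 2 * \<delta>^2 / iv)"
    using scaled[of sv "Sv 0"] scaled[of iv "Iv 0"] p d0 \<delta> sv_pos iv_pos d a_pos
    by (intro mult_left_mono add_mono) auto
  have "delay_integrand s \<le> 2 * (incidence_lip * \<delta>)^2" if s: "-tau < s" "s < 0" for s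
  proof -
    have ds: "dev s < \<delta>" using init s by force
    then have near: "dev s \<le> near_radius" using \<delta> by simp
    have "\<bar>Cvh * Iv s * Sh s / (Sv s + Iv s) / Feq - 1\<bar> \<le> incidence_lip * \<delta>"
      by (rule incidence_ratio_near_one[OF ds \<delta>(2)])
    then have "(Cvh * Iv s * Sh s / (Sv s + Iv s) / Feq - 1)^2 \<le> (incidence_lip * \<delta>)^2"
      by (metis abs_ge_zero power2_abs power_mono)
    then show ?thesis
      using delay_integrand_eq[OF _ near] volterra_le_two_sq[OF incidence_ratio_bounds(1)[OF near]] s
      by simp
  qed
  then have "Feq * (delay_integral 0 - delay_integral (- tau)) \<le> Feq * (2 * (incidence_lip * \<delta>)^2 * tau)"
    using Feq_pos by (intro mult_left_mono delay_integral_diff_le) auto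
  moreover have "c * (Sv 0 + Iv 0 - N)^2 \<le> c * (2 * \<delta>)^2"
  proof -
    have "\<bar>Sv 0 + Iv 0 - N\<bar> \<le> 2 * \<delta>" using d unfolding N_def by auto
    then have "(Sv 0 + Iv 0 - N)^2 \<le> (2 * \<delta>)^2"
      by (metis abs_ge_zero power2_abs power_mono)
    then show ?thesis using c_pos by (intro mult_left_mono) auto
  qed
  ultimately have "W 0 \<le> 2 * \<delta>^2 / sh + 2 * \<delta>^2 / ih + a * (2 * \<delta>^2 / sv + 2 * \<delta>^2 / iv)
      + Feq * (2 * (incidence_lip * \<delta>)^2 * tau) + c * (2 * \<delta>)^2"
    using scaled[of sh "Sh 0"] scaled[of ih "Ih 0"] vector p d0 \<delta> sh_pos ih_pos d
    unfolding W_def by force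
  also have "\<dots> = upper_coeff * \<delta>^2"
    by (simp add: upper_coeff_def algebra_simps power2_eq_square)
  finally show ?thesis .
qed

lemma continuous_on_W:
  assumes "\<And>s. 0 \<le> s \<Longrightarrow> s \<le> T \<Longrightarrow> dev s \<le> near_radius"
  shows "continuous_on {0..T} W"
proof -
  have sub: "{0..T} \<subseteq> {-tau..}" using tau_nonneg by auto
  have "continuous_on {0..T} delay_integral"
    using delay_integral_deriv tau_nonneg
    by (intro continuous_on_of_DERIV[of _ delay_integral delay_integrand]) auto
  moreover have "((\<lambda>x. delay_integral (x - tau)) has_real_derivative delay_integrand (x - tau)) (at x)"
    if "x \<ge> 0" for x
    using delay_integral_deriv[of "x - tau"] DERIV_shift[of delay_integral _ x "- tau"] that by simp
  then have "continuous_on {0..T} (\<lambda>x. delay_integral (x - tau))"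
    by (intro continuous_on_of_DERIV[of _ _ "\<lambda>x. delay_integrand (x - tau)"]) auto
  moreover have "\<forall>s\<in>{0..T}. Sh s \<noteq> 0 \<and> Ih s \<noteq> 0 \<and> Sv s \<noteq> 0 \<and> Iv s \<noteq> 0"
  proof
    fix s assume "s \<in> {0..T}"
    then show "Sh s \<noteq> 0 \<and> Ih s \<noteq> 0 \<and> Sv s \<noteq> 0 \<and> Iv s \<noteq> 0"
      using near_pos[of s] assms by auto
  qed
  ultimately show ?thesis
    unfolding W_def[abs_def] volterra_def
    using continuous_on_subset[OF continuous_on_solution(1) sub] continuous_on_subset[OF continuous_on_solution(2) sub]
      continuous_on_subset[OF continuous_on_solution(3) sub] continuous_on_subset[OF continuous_on_solution(4) sub]
      sh_pos ih_pos sv_pos iv_pos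
    by (intro continuous_intros) auto
qed

lemma W_le_W0:
  assumes "0 \<le> T" and near: "\<And>s. 0 \<le> s \<Longrightarrow> s \<le> T \<Longrightarrow> dev s \<le> near_radius \<and> dev (s - tau) \<le> near_radius"
  shows "W T \<le> W 0"
proof -
  have "W T - W 0 \<le> 0 * (T - 0)"
  proof (rule diff_le_of_deriv_le[OF assms(1) continuous_on_W])
    fix x assume x: "0 < x" "x < T"
    then show "(W has_real_derivative lyapunov_rate (Sh x) (Ih x) (Sv x) (Iv x) (delayed_incidence x)) (at x)"
      using near by (intro W_has_derivative) auto
    have "lyapunov_rate (Sh x) (Ih x) (Sv x) (Iv x) (delayed_incidence x) \<le> - k * ((Sh x - sh)^2 + (Sv x - sv)^2)"
      using x near by (intro lyapunov_rate_along_le) auto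
    also have "\<dots> \<le> 0" using k_pos by simp
    finally show "lyapunov_rate (Sh x) (Ih x) (Sv x) (Iv x) (delayed_incidence x) \<le> 0" .
  qed (use near in auto)
  then show ?thesis by simp
qed

lemma dev_stays_small:
  assumes \<rho>: "0 < \<rho>" "\<rho> \<le> near_radius"
    and init: "\<And>\<theta>. -tau \<le> \<theta> \<Longrightarrow> \<theta> \<le> 0 \<Longrightarrow> dev \<theta> < \<rho> * initial_factor"
    and t: "t \<ge> 0"
  shows "dev t < \<rho>"
proof (rule ccontr)
  define \<delta> where "\<delta> = \<rho> * initial_factor"
  have \<delta>: "0 < \<delta>" "\<delta> \<le> \<rho> / 2"
    using \<rho> initial_factor_pos initial_factor_le by (auto simp: \<delta>_def)
  have "upper_coeff * initial_factor \<le> upper_coeff * (lower_coeff / (2 * upper_coeff))"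
    using upper_coeff_pos by (intro mult_left_mono) (auto simp: initial_factor_def)
  then have "upper_coeff * initial_factor * initial_factor \<le> lower_coeff / 2 * (1 / 2)"
    using upper_coeff_pos initial_factor_pos initial_factor_le lower_coeff_pos
    by (intro mult_mono) auto
  then have "upper_coeff * \<delta>^2 \<le> lower_coeff / 4 * \<rho>^2"
    using \<rho> by (simp add: \<delta>_def power2_eq_square mult_right_mono mult.assoc mult.left_commute)
  moreover have "\<delta> \<le> near_radius" using \<delta> \<rho> by simp
  then have "W 0 \<le> upper_coeff * \<delta>^2"
    by (rule W0_le[OF \<delta>(1) _ init[folded \<delta>_def]])
  moreover have "0 < lower_coeff * \<rho>^2" using lower_coeff_pos \<rho> by simp
  ultimately have W0: "W 0 < lower_coeff * \<rho>^2" by linarith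
  assume "\<not> dev t < \<rho>"
  moreover have "dev 0 < \<rho>" using init[of 0] \<delta> tau_nonneg by (simp add: \<delta>_def)
  moreover have "continuous_on {0..t} dev"
    by (rule continuous_on_subset[OF continuous_on_dev]) (use tau_nonneg in auto)
  ultimately obtain t1 where t1: "0 < t1" "dev t1 = \<rho>"
    and below: "\<And>s. 0 \<le> s \<Longrightarrow> s \<le> t1 \<Longrightarrow> dev s \<le> \<rho>"
    using first_hitting_time[of t dev \<rho>] t by auto
  have "dev s \<le> near_radius \<and> dev (s - tau) \<le> near_radius" if s: "0 \<le> s" "s \<le> t1" for s
  proof (cases "s - tau < 0")
    case True
    then have "dev (s - tau) < \<delta>" using init[of "s - tau"] s by (simp add: \<delta>_def)
    then show ?thesis using below[OF s] \<delta> \<rho> by simp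
  next
    case False
    then show ?thesis using below[OF s] below[of "s - tau"] s tau_nonneg \<rho> by simp
  qed
  then have "W t1 \<le> W 0" using t1 by (intro W_le_W0) auto
  moreover have "lower_coeff * (dev t1)^2 \<le> W t1"
    using W_ge[of t1] t1 \<rho> by simp
  ultimately show False using W0 t1 by simp
qed

lemma dev_lt_of_init_close:
  assumes "init_close tau (sh, ih, sv, iv) \<delta> Sh Ih Sv Iv" "-tau \<le> \<theta>" "\<theta> \<le> 0"
  shows "dev \<theta> < \<delta>"
proof -
  have "continuous_on {-tau..0} dev" by (rule continuous_on_subset[OF continuous_on_dev]) auto
  then have "bdd_above (dev ` {-tau..0})"
    by (intro bounded_imp_bdd_above compact_imp_bounded compact_continuous_image) auto
  then have "dev \<theta> \<le> (SUP x\<in>{-tau..0}. dev x)" using assms by (intro cSUP_upper) auto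
  also have "\<dots> < \<delta>" using assms unfolding init_close_def dev_def[abs_def] by simp
  finally show ?thesis .
qed

lemma speed_bounds:
  assumes "dev t \<le> near_radius"
  shows "\<bar>bh - Cvh * (Iv t / (Sv t + Iv t)) * Sh t - mh * Sh t\<bar> \<le> bh + Cvh * (2 * sh) + mh * (2 * sh)"
    "\<bar>bv - Chv * Ih t * Sv t - mv * Sv t\<bar> \<le> bv + Chv * (2 * ih) * (2 * sv) + mv * (2 * sv)"
proof -
  note p = near_pos[OF assms]
  have "0 \<le> Iv t / (Sv t + Iv t)" "Iv t / (Sv t + Iv t) \<le> 1" using p by auto
  then have "0 \<le> Cvh * (Iv t / (Sv t + Iv t)) * Sh t" "Cvh * (Iv t / (Sv t + Iv t)) * Sh t \<le> Cvh * 1 * (2 * sh)"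
    using p Cvh_pos by (simp, intro mult_mono mult_left_mono) auto
  moreover have "0 \<le> mh * Sh t" "mh * Sh t \<le> mh * (2 * sh)" using p mh_pos by auto
  ultimately show "\<bar>bh - Cvh * (Iv t / (Sv t + Iv t)) * Sh t - mh * Sh t\<bar> \<le> bh + Cvh * (2 * sh) + mh * (2 * sh)"
    using bh_pos by (simp add: abs_le_iff)
  have "0 \<le> Chv * Ih t * Sv t" "Chv * Ih t * Sv t \<le> Chv * (2 * ih) * (2 * sv)"
    using p Chv_pos by (simp, intro mult_mono mult_left_mono) auto
  moreover have "0 \<le> mv * Sv t" "mv * Sv t \<le> mv * (2 * sv)" using p mv_pos by auto
  ultimately show "\<bar>bv - Chv * Ih t * Sv t - mv * Sv t\<bar> \<le> bv + Chv * (2 * ih) * (2 * sv) + mv * (2 * sv)"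
    using bv_pos by (simp add: abs_le_iff)
qed

lemma susceptibles_tendsto:
  assumes near: "\<And>t. t \<ge> -tau \<Longrightarrow> dev t \<le> near_radius"
  shows "(Sh \<longlongrightarrow> sh) at_top" "(Sv \<longlongrightarrow> sv) at_top"
proof -
  let ?rate = "\<lambda>t. lyapunov_rate (Sh t) (Ih t) (Sv t) (Iv t) (delayed_incidence t)"
  have near': "dev t \<le> near_radius" "dev (t - tau) \<le> near_radius" if "t > 0" for t
    using near that tau_nonneg by auto
  have dW: "(W has_real_derivative ?rate t) (at t)" if "t > 0" for t
    using W_has_derivative near' that by blast
  have W_nonneg: "W t \<ge> 0" if "t > 0" for t
    using W_ge[of t] near' that lower_coeff_pos
    by (meson order_trans less_imp_le zero_le_mult_iff zero_le_power2)
  have rate: "?rate t \<le> - k * (Sh t - sh)^2" "?rate t \<le> - k * (Sv t - sv)^2" if "t > 0" for t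
  proof -
    have "0 \<le> k * (Sh t - sh)^2" "0 \<le> k * (Sv t - sv)^2" using k_pos by simp_all
    then show "?rate t \<le> - k * (Sh t - sh)^2" "?rate t \<le> - k * (Sv t - sv)^2"
      using lyapunov_rate_along_le[OF that near'[OF that]] by (simp_all add: distrib_left)
  qed
  have "((\<lambda>t. Sh t - sh) \<longlongrightarrow> 0) at_top"
  proof (rule tendsto_zero_of_dissipation[OF k_pos _ dW W_nonneg rate(1)])
    show "bh + Cvh * (2 * sh) + mh * (2 * sh) > 0" using bh_pos Cvh_pos mh_pos sh_pos by (simp add: add_pos_pos)
  qed (use solution_derivs(1) speed_bounds(1) near' in \<open>auto intro!: derivative_eq_intros\<close>)
  then show "(Sh \<longlongrightarrow> sh) at_top" using tendsto_add[OF _ tendsto_const[of sh]] by fastforce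
  have "((\<lambda>t. Sv t - sv) \<longlongrightarrow> 0) at_top"
  proof (rule tendsto_zero_of_dissipation[OF k_pos _ dW W_nonneg rate(2)])
    show "bv + Chv * (2 * ih) * (2 * sv) + mv * (2 * sv) > 0"
      using bv_pos Chv_pos mv_pos ih_pos sv_pos by (simp add: add_pos_pos)
  qed (use solution_derivs(3) speed_bounds(2) near' in \<open>auto intro!: derivative_eq_intros\<close>)
  then show "(Sv \<longlongrightarrow> sv) at_top" using tendsto_add[OF _ tendsto_const[of sv]] by fastforce
qed

lemma infectives_tendsto:
  assumes Sh: "(Sh \<longlongrightarrow> sh) at_top" and Sv: "(Sv \<longlongrightarrow> sv) at_top"
  shows "(Iv \<longlongrightarrow> iv) at_top" "(Ih \<longlongrightarrow> ih) at_top"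
proof -
  have "((\<lambda>t. Sv t + Iv t) \<longlongrightarrow> bv / mv) at_top"
  proof (rule tendsto_of_linear_ode[OF mv_pos _ tendsto_const])
    fix t :: real assume "t > 0"
    then show "((\<lambda>t. Sv t + Iv t) has_real_derivative bv - mv * (Sv t + Iv t)) (at t)"
      using solution_derivs by (auto intro!: derivative_eq_intros simp: algebra_simps)
  qed
  then have "((\<lambda>t. (Sv t + Iv t) - Sv t) \<longlongrightarrow> bv / mv - sv) at_top"
    using Sv by (intro tendsto_diff)
  moreover have "bv / mv - sv = iv" using bv_eq mv_pos by (simp add: N_def)
  ultimately show Iv: "(Iv \<longlongrightarrow> iv) at_top" by simp
  have shift: "filterlim (\<lambda>t. t - tau) at_top at_top" by real_asymp
  have "(delayed_incidence \<longlongrightarrow> Cvh * (iv / (sv + iv)) * sh) at_top"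
    unfolding delayed_incidence_def[abs_def] using sv_pos iv_pos
    by (intro tendsto_intros filterlim_compose[OF Iv shift] filterlim_compose[OF Sv shift]
        filterlim_compose[OF Sh shift]) auto
  then have "(Ih \<longlongrightarrow> Cvh * (iv / (sv + iv)) * sh / mh) at_top"
    using tendsto_of_linear_ode[of mh Ih delayed_incidence] mh_pos solution_derivs(2) by blast
  moreover have "Cvh * (iv / (sv + iv)) * sh / mh = ih"
    using equilibrium_eqs(2) mh_pos by (simp add: field_simps)
  ultimately show "(Ih \<longlongrightarrow> ih) at_top" by simp
qed

lemma stability_estimate:
  assumes "0 < \<rho>" "\<rho> \<le> near_radius" "init_close tau (sh, ih, sv, iv) (\<rho> * initial_factor) Sh Ih Sv Iv"
    and "t \<ge> 0"
  shows "\<bar>Sh t - sh\<bar> < \<rho> \<and> \<bar>Ih t - ih\<bar> < \<rho> \<and> \<bar>Sv t - sv\<bar> < \<rho> \<and> \<bar>Iv t - iv\<bar> < \<rho>"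
  using dev_stays_small[OF assms(1,2) dev_lt_of_init_close[OF assms(3)] assms(4)]
  by (simp add: dev_def)

lemma attractivity:
  assumes "init_close tau (sh, ih, sv, iv) (near_radius * initial_factor) Sh Ih Sv Iv"
  shows "(Sh \<longlongrightarrow> sh) at_top \<and> (Ih \<longlongrightarrow> ih) at_top \<and> (Sv \<longlongrightarrow> sv) at_top \<and> (Iv \<longlongrightarrow> iv) at_top"
proof -
  have init: "dev \<theta> < near_radius * initial_factor" if "-tau \<le> \<theta>" "\<theta> \<le> 0" for \<theta>
    using dev_lt_of_init_close[OF assms that] .
  have "dev t \<le> near_radius" if "t \<ge> -tau" for t
  proof (cases "t \<ge> 0")
    case True
    then show ?thesis using dev_stays_small[OF near_radius_pos order.refl init] by (simp add: less_imp_le)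
  next
    case False
    then have "dev t < near_radius * initial_factor" using init that by simp
    also have "\<dots> \<le> near_radius" using near_radius_pos initial_factor_le by simp
    finally show ?thesis by simp
  qed
  then show ?thesis using susceptibles_tendsto infectives_tendsto by blast
qed

end

lemma (in host_vector_endemic) endemic_solutionI:
  "is_solution bh bv mh mv Cvh Chv tau Sh Ih Sv Iv \<Longrightarrow> endemic_solution bh bv mh mv Cvh Chv tau sh ih sv iv Sh Ih Sv Iv"
  by (intro endemic_solution.intro host_vector_endemic_axioms endemic_solution_axioms.intro)

lemma (in host_vector_endemic) endemic_locally_asymptotically_stable:
  "locally_asymptotically_stable bh bv mh mv Cvh Chv tau (sh, ih, sv, iv)"
  unfolding locally_asymptotically_stable_def split
proof (intro conjI allI impI)
  fix \<epsilon> :: real assume "\<epsilon> > 0"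
  then show "\<exists>\<delta>>0. \<forall>Sh Ih Sv Iv. in_Cplus tau Sh Ih Sv Iv \<and> init_close tau (sh, ih, sv, iv) \<delta> Sh Ih Sv Iv \<and>
      is_solution bh bv mh mv Cvh Chv tau Sh Ih Sv Iv \<longrightarrow>
      (\<forall>t\<ge>0. \<bar>Sh t - sh\<bar> < \<epsilon> \<and> \<bar>Ih t - ih\<bar> < \<epsilon> \<and> \<bar>Sv t - sv\<bar> < \<epsilon> \<and> \<bar>Iv t - iv\<bar> < \<epsilon>)"
    using endemic_solution.stability_estimate[OF endemic_solutionI, of _ _ _ _ "min \<epsilon> near_radius"]
      near_radius_pos initial_factor_pos
    by (intro exI[of _ "min \<epsilon> near_radius * initial_factor"]) force
next
  show "\<exists>\<delta>>0. \<forall>Sh Ih Sv Iv. in_Cplus tau Sh Ih Sv Iv \<and> init_close tau (sh, ih, sv, iv) \<delta> Sh Ih Sv Iv \<and>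
      is_solution bh bv mh mv Cvh Chv tau Sh Ih Sv Iv \<longrightarrow>
      (Sh \<longlongrightarrow> sh) at_top \<and> (Ih \<longlongrightarrow> ih) at_top \<and> (Sv \<longlongrightarrow> sv) at_top \<and> (Iv \<longlongrightarrow> iv) at_top"
    using endemic_solution.attractivity[OF endemic_solutionI] near_radius_pos initial_factor_pos
    by (intro exI[of _ "near_radius * initial_factor"]) auto
qed

theorem theorem3:
  fixes bh bv mh mv Cvh Chv tau :: real
  assumes "bh > 0" "bv > 0" "mh > 0" "mv > 0" "Cvh > 0" "Chv > 0"
    and "R0 bh bv mh mv Cvh Chv > 1"
    and "tau \<ge> 0"
  shows "(\<exists>!E. endemic_equilibrium bh bv mh mv Cvh Chv E) \<and>
         (\<forall>E. endemic_equilibrium bh bv mh mv Cvh Chv E \<longrightarrow>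
              locally_asymptotically_stable bh bv mh mv Cvh Chv tau E)"
proof (intro conjI allI impI)
  show "\<exists>!E. endemic_equilibrium bh bv mh mv Cvh Chv E"
    using endemic_equilibrium_endemic_point[OF assms(1-7)] endemic_equilibrium_unique[OF assms(1-6)]
    by (metis prod_cases4)
  fix E assume "endemic_equilibrium bh bv mh mv Cvh Chv E"
  moreover obtain sh ih sv iv where E: "E = (sh, ih, sv, iv)" by (metis prod_cases4)
  ultimately interpret host_vector_endemic bh bv mh mv Cvh Chv tau sh ih sv iv
    using assms by unfold_locales auto
  show "locally_asymptotically_stable bh bv mh mv Cvh Chv tau E"
    unfolding E by (rule endemic_locally_asymptotically_stable)
qed

end
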